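(* For every integer $N$ there exists a graph $G$ with $\pi_T(G)-\pi_{T_w}(G)\ge N$; that is, the difference between $\pi_{T_w}$ and $\pi_T$ can be arbitrarily large.
   Context: Graphs are finite and simple. A sequence is nonrepetitive if no block of consecutive terms has the form $r_1\dots r_nr_1\dots r_n$ with $n\ge1$. A weak total Thue colouring of $G$ is a colouring of $V(G)\cup E(G)$ such that for every path $v_1,e_1,v_2,\dots,e_{k-1},v_k$ the sequence of colours of $v_1,e_1,\dots,v_k$ is nonrepetitive; $\pi_{T_w}(G)$ is the minimum number of colours in such a colouring. A (strong) total Thue colouring is a weak total Thue colouring in which additionally the colour sequence of the vertices of every path and the colour sequence of the edges of every path are nonrepetitive; $\pi_T(G)$ is the minimum number of colours in such a colouring. *)

theory Defs
  imports Main
begin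

definition simple_graph :: "'a set \<Rightarrow> 'a set set \<Rightarrow> bool" where
  "simple_graph V E \<longleftrightarrow> finite V \<and>
     (\<forall>e\<in>E. \<exists>u v. u \<noteq> v \<and> u \<in> V \<and> v \<in> V \<and> e = {u, v})"

definition is_path :: "'a set \<Rightarrow> 'a set set \<Rightarrow> 'a list \<Rightarrow> bool" where
  "is_path V E ps \<longleftrightarrow> ps \<noteq> [] \<and> distinct ps \<and> set ps \<subseteq> V \<and>
     (\<forall>i. Suc i < length ps \<longrightarrow> {ps ! i, ps ! Suc i} \<in> E)"

definition path_edges :: "'a list \<Rightarrow> 'a set list" where
  "path_edges ps = map (\<lambda>i. {ps ! i, ps ! Suc i}) [0..<length ps - 1]"

fun total_seq :: "('a \<Rightarrow> 'c) \<Rightarrow> ('a set \<Rightarrow> 'c) \<Rightarrow> 'a list \<Rightarrow> 'c list" where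
  "total_seq f g [] = []"
| "total_seq f g [v] = [f v]"
| "total_seq f g (u # v # vs) = f u # g {u, v} # total_seq f g (v # vs)"

definition nonrepetitive :: "'c list \<Rightarrow> bool" where
  "nonrepetitive s \<longleftrightarrow> \<not> (\<exists>xs r zs. r \<noteq> [] \<and> s = xs @ r @ r @ zs)"

definition weak_total_thue :: "'a set \<Rightarrow> 'a set set \<Rightarrow> nat \<Rightarrow> ('a \<Rightarrow> nat) \<Rightarrow> ('a set \<Rightarrow> nat) \<Rightarrow> bool" where
  "weak_total_thue V E k f g \<longleftrightarrow> (\<forall>v\<in>V. f v < k) \<and> (\<forall>e\<in>E. g e < k) \<and>
     (\<forall>ps. is_path V E ps \<longrightarrow> nonrepetitive (total_seq f g ps))"

definition total_thue :: "'a set \<Rightarrow> 'a set set \<Rightarrow> nat \<Rightarrow> ('a \<Rightarrow> nat) \<Rightarrow> ('a set \<Rightarrow> nat) \<Rightarrow> bool" where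
  "total_thue V E k f g \<longleftrightarrow> weak_total_thue V E k f g \<and>
     (\<forall>ps. is_path V E ps \<longrightarrow> nonrepetitive (map f ps) \<and> nonrepetitive (map g (path_edges ps)))"

definition pi_Tw :: "'a set \<Rightarrow> 'a set set \<Rightarrow> nat" where
  "pi_Tw V E = (LEAST k. \<exists>f g. weak_total_thue V E k f g)"

definition pi_T :: "'a set \<Rightarrow> 'a set set \<Rightarrow> nat" where
  "pi_T V E = (LEAST k. \<exists>f g. total_thue V E k f g)"

end

theory Submission
  imports Defs
begin

text \<open>The star K_{1,n} separates the two parameters. Every path in it has at most three vertices,
so colouring the centre, the leaves and the edges with three different colours is already a weak
total Thue colouring. In a strong colouring, however, the edge colours along the path i, 0, j must
differ, so all n edges (which pairwise meet at the centre) need distinct colours.\<close>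

lemma distinct_imp_nonrepetitive: "distinct s \<Longrightarrow> nonrepetitive s"
  unfolding nonrepetitive_def by (auto simp: neq_Nil_conv)

lemma nonrepetitive_pair_iff: "nonrepetitive [a, b] \<longleftrightarrow> a \<noteq> b"
  unfolding nonrepetitive_def by (auto simp: Cons_eq_append_conv append_eq_Cons_conv)

lemma nonrepetitive_palindrome5:
  "a \<noteq> b \<Longrightarrow> b \<noteq> c \<Longrightarrow> a \<noteq> c \<Longrightarrow> nonrepetitive [a, b, c, b, a]"
  unfolding nonrepetitive_def by (auto simp: Cons_eq_append_conv append_eq_Cons_conv)

lemma path_edges_Cons_Cons: "path_edges (u # v # vs) = {u, v} # path_edges (v # vs)"
  by (simp add: path_edges_def map_upt_Suc del: upt_Suc)

lemma total_thue_adjacent_edges_distinct: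
  assumes "total_thue V E k f g" and "{u, v} \<in> E" and "{v, w} \<in> E"
    and "u \<in> V" "v \<in> V" "w \<in> V" and "distinct [u, v, w]"
  shows "g {u, v} \<noteq> g {v, w}"
proof -
  have "is_path V E [u, v, w]"
    using assms(2-) unfolding is_path_def by (auto simp: less_Suc_eq nth_Cons')
  then have "nonrepetitive (map g (path_edges [u, v, w]))"
    using assms(1) unfolding total_thue_def by blast
  then show ?thesis
    by (simp add: path_edges_Cons_Cons path_edges_def nonrepetitive_pair_iff)
qed

lemma pi_Tw_le: "weak_total_thue V E k f g \<Longrightarrow> pi_Tw V E \<le> k"
  unfolding pi_Tw_def by (rule Least_le) blast

lemma total_thue_pi_T:
  assumes "total_thue V E k f g"
  obtains f' g' where "total_thue V E (pi_T V E) f' g'"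
  using LeastI_ex[of "\<lambda>k. \<exists>f g. total_thue V E k f g"] assms unfolding pi_T_def by blast

definition star_vertices :: "nat \<Rightarrow> nat set" where
  "star_vertices n = {0..n}"

definition star_edges :: "nat \<Rightarrow> nat set set" where
  "star_edges n = (\<lambda>i. {0, i}) ` {1..n}"

lemma simple_graph_star: "simple_graph (star_vertices n) (star_edges n)"
  unfolding simple_graph_def star_vertices_def star_edges_def
proof (intro conjI ballI)
  fix e assume "e \<in> (\<lambda>i. {0::nat, i}) ` {1..n}"
  then obtain i where "i \<in> {1..n}" "e = {0, i}" by blast
  then show "\<exists>u v. u \<noteq> v \<and> u \<in> {0..n} \<and> v \<in> {0..n} \<and> e = {u, v}"
    by (intro exI[of _ 0] exI[of _ i]) auto
qed simp

lemma star_edge_iff: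
  "{a, b} \<in> star_edges n \<longleftrightarrow> (a = 0 \<and> b \<in> {1..n}) \<or> (b = 0 \<and> a \<in> {1..n})"
  unfolding star_edges_def by (auto simp: doubleton_eq_iff)

lemma card_star_edges: "card (star_edges n) = n"
  unfolding star_edges_def by (subst card_image) (auto simp: inj_on_def doubleton_eq_iff)

lemma star_path_cases:
  assumes "is_path (star_vertices n) (star_edges n) ps"
  obtains v where "ps = [v]"
  | i where "i \<in> {1..n}" "ps = [i, 0] \<or> ps = [0, i]"
  | i j where "i \<in> {1..n}" "j \<in> {1..n}" "i \<noteq> j" "ps = [i, 0, j]"
proof -
  have "distinct ps"
    and edge: "\<And>i. Suc i < length ps \<Longrightarrow> {ps ! i, ps ! Suc i} \<in> star_edges n"
    using assms unfolding is_path_def by auto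
  consider v where "ps = [v]" | a b where "ps = [a, b]" | a b c where "ps = [a, b, c]"
    | a b c d rest where "ps = a # b # c # d # rest"
    using assms unfolding is_path_def by (metis list.exhaust)
  then show thesis
  proof cases
    case (4 a b c d rest)
    have "{a, b} \<in> star_edges n" "{c, d} \<in> star_edges n"
      using edge[of 0] edge[of 2] by (simp_all add: 4 numeral_2_eq_2)
    \<comment> \<open>each of the two disjoint edges would have to contain the centre\<close>
    then show ?thesis using \<open>distinct ps\<close> by (auto simp: 4 star_edge_iff)
  next
    case (3 a b c)
    have "{a, b} \<in> star_edges n" "{b, c} \<in> star_edges n"
      using edge[of 0] edge[of 1] by (simp_all add: 3)
    then show ?thesis using \<open>distinct ps\<close> that(3) by (auto simp: 3 star_edge_iff)
  qed (use that edge[of 0] star_edge_iff in auto)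
qed

lemma weak_total_thue_star:
  "weak_total_thue (star_vertices n) (star_edges n) 3 (\<lambda>v. if v = 0 then 0 else 1) (\<lambda>e. 2)"
  unfolding weak_total_thue_def
proof (intro conjI ballI allI impI)
  fix ps assume "is_path (star_vertices n) (star_edges n) ps"
  then show "nonrepetitive (total_seq (\<lambda>v. if v = 0 then 0 else 1) (\<lambda>e. 2 :: nat) ps)"
    by (cases rule: star_path_cases)
      (auto simp: distinct_imp_nonrepetitive nonrepetitive_palindrome5)
qed auto

lemma total_thue_star:
  "total_thue (star_vertices n) (star_edges n) (2 * n + 1) (\<lambda>v. v) (\<lambda>e. n + \<Sum>e)"
  unfolding total_thue_def weak_total_thue_def
proof (intro conjI ballI allI impI)
  fix ps assume "is_path (star_vertices n) (star_edges n) ps"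
  then have "distinct (total_seq (\<lambda>v. v) (\<lambda>e. n + \<Sum>e) ps) \<and> distinct ps
      \<and> distinct (map (\<lambda>e. n + \<Sum>e) (path_edges ps))"
    by (cases rule: star_path_cases) (auto simp: path_edges_Cons_Cons path_edges_def)
  then show "nonrepetitive (total_seq (\<lambda>v. v) (\<lambda>e. n + \<Sum>e) ps)"
    and "nonrepetitive (map (\<lambda>v. v) ps)"
    and "nonrepetitive (map (\<lambda>e. n + \<Sum>e) (path_edges ps))"
    by (simp_all add: distinct_imp_nonrepetitive)
qed (auto simp: star_vertices_def star_edges_def)

lemma total_thue_star_colours_ge:
  assumes "total_thue (star_vertices n) (star_edges n) k f g"
  shows "n \<le> k"
proof -
  have "inj_on g (star_edges n)"
  proof (rule inj_onI, rule ccontr)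
    fix x y assume "x \<in> star_edges n" "y \<in> star_edges n" "g x = g y" "x \<noteq> y"
    then obtain i j where "i \<in> {1..n}" "j \<in> {1..n}" "i \<noteq> j" "x = {0, i}" "y = {0, j}"
      unfolding star_edges_def by blast
    then show False
      using total_thue_adjacent_edges_distinct[OF assms, of i 0 j] \<open>g x = g y\<close>
      by (auto simp: star_edge_iff star_vertices_def insert_commute)
  qed
  moreover have "g ` star_edges n \<subseteq> {..<k}"
    using assms unfolding total_thue_def weak_total_thue_def by auto
  ultimately show ?thesis
    using card_mono[of "{..<k}" "g ` star_edges n"] by (simp add: card_image card_star_edges)
qed

theorem mainTheorem4:
  fixes N :: int
  shows "\<exists>(V :: nat set) (E :: nat set set).
           simple_graph V E \<and> int (pi_T V E) - int (pi_Tw V E) \<ge> N"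
proof -
  define n where "n = nat N + 3"
  have "pi_Tw (star_vertices n) (star_edges n) \<le> 3"
    using weak_total_thue_star by (rule pi_Tw_le)
  moreover obtain f g where "total_thue (star_vertices n) (star_edges n)
      (pi_T (star_vertices n) (star_edges n)) f g"
    using total_thue_star by (rule total_thue_pi_T)
  then have "n \<le> pi_T (star_vertices n) (star_edges n)"
    by (rule total_thue_star_colours_ge)
  ultimately show ?thesis
    using simple_graph_star[of n] unfolding n_def by fastforce
qed

end
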